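(* Let $k_1<k_2$ be integers with $k_1\ge 3$, and let $n$ be a positive integer. If $\nu_{k_1}(n+k_1-3)>0$, then $\nu_{k_2}(n+k_2-3)>0$.
   Context: For an integer $k\ge 3$ and a positive integer $m$, $\nu_k(m)$ denotes the number of $k$-tuples of integers $(x_1,\dots,x_k)$ with $1\le x_1\le x_2\le\dots\le x_k$ such that $x_1x_2\cdots x_k+x_1+x_2+\dots+x_k=m$. *)

theory Defs
  imports Main
begin

definition nu :: "nat \<Rightarrow> int \<Rightarrow> nat" where
  "nu k m = card {xs :: int list. length xs = k \<and> sorted xs \<and> (\<forall>x\<in>set xs. 1 \<le> x)
                 \<and> prod_list xs + sum_list xs = m}"

end

theory Submission
  imports Defs
begin

text \<open>Prepending ones to a solution of length k of x_1 \<cdots> x_k + x_1 + \<dots> + x_k = m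
  leaves the product unchanged and raises the sum by one per added entry, so every solution
  for (k, m) yields a solution for (k + j, m + j).\<close>

definition nu_tuples :: "nat \<Rightarrow> int \<Rightarrow> int list set" where
  "nu_tuples k m = {xs. length xs = k \<and> sorted xs \<and> (\<forall>x\<in>set xs. 1 \<le> x)
                        \<and> prod_list xs + sum_list xs = m}"

lemma nu_eq_card_nu_tuples: "nu k m = card (nu_tuples k m)"
  unfolding nu_def nu_tuples_def ..

lemma prod_list_nonneg: "\<forall>x\<in>set xs. (0::int) \<le> x \<Longrightarrow> 0 \<le> prod_list xs"
  by (induction xs) auto

lemma nu_tuples_subset_lists: "nu_tuples k m \<subseteq> {xs. set xs \<subseteq> {1..m} \<and> length xs = k}"
proof
  fix xs assume xs: "xs \<in> nu_tuples k m"
  then have ge1: "\<forall>x\<in>set xs. 1 \<le> x" and len: "length xs = k"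
    and eq: "prod_list xs + sum_list xs = m"
    by (simp_all add: nu_tuples_def)
  have "0 \<le> prod_list xs" using ge1 by (intro prod_list_nonneg) auto
  moreover have "x \<le> sum_list xs" if "x \<in> set xs" for x
    using ge1 that by (intro member_le_sum_list) auto
  ultimately have "set xs \<subseteq> {1..m}" using ge1 eq by fastforce
  with len show "xs \<in> {xs. set xs \<subseteq> {1..m} \<and> length xs = k}" by simp
qed

lemma finite_nu_tuples: "finite (nu_tuples k m)"
  using nu_tuples_subset_lists by (rule finite_subset) (simp add: finite_lists_length_eq)

lemma nu_pos_iff: "0 < nu k m \<longleftrightarrow> nu_tuples k m \<noteq> {}"
  by (simp add: nu_eq_card_nu_tuples card_gt_0_iff finite_nu_tuples)

lemma replicate_one_append_in_nu_tuples:
  assumes "xs \<in> nu_tuples k m"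
  shows "replicate j 1 @ xs \<in> nu_tuples (j + k) (int j + m)"
  using assms by (auto simp: nu_tuples_def sorted_append sum_list_replicate)

lemma nu_pos_add_ones:
  assumes "0 < nu k m"
  shows "0 < nu (j + k) (int j + m)"
  using assms replicate_one_append_in_nu_tuples unfolding nu_pos_iff by blast

theorem corollary1:
  fixes k1 k2 :: nat and n :: int
  assumes "3 \<le> k1" and "k1 < k2" and "0 < n"
    and "nu k1 (n + int k1 - 3) > 0"
  shows "nu k2 (n + int k2 - 3) > 0"
proof -
  have "0 < nu ((k2 - k1) + k1) (int (k2 - k1) + (n + int k1 - 3))"
    using assms(4) by (rule nu_pos_add_ones)
  moreover have "(k2 - k1) + k1 = k2" and "int (k2 - k1) + (n + int k1 - 3) = n + int k2 - 3"
    using assms(2) by simp_all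
  ultimately show ?thesis by (simp only:)
qed

end
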